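(* Consider the Byzantine setting and Byzantine-resilient algorithm of the context, with aggregation rules having contraction constant $\rho$ and virtual weight matrix $E$, and let $\Lambda^k\in\mathbb R^{H\times D}$ be the matrix with rows $(\lambda_i^k)^\top$, $i\in\mathcal H$. Assume $\kappa:=\|E-\frac1H\mathbf 1\mathbf 1^\top E\|^2<1$, $\rho<\frac{1-\kappa}{8\sqrt H}$, and set $\epsilon:=1-\kappa-8\rho\sqrt H$, assumed to lie in $(0,1)$. Assume moreover that for all $k\ge0$ the step sizes satisfy $$\frac{18(\gamma^k)^2}{\epsilon\,u_f^2J^2}\le\frac{(2-\epsilon)\epsilon^2}{3(3-\epsilon)}\qquad\text{and}\qquad1\le\frac{(\gamma^k)^2}{(\gamma^{k+1})^2}\le\frac{2}{1+(1-\epsilon^2)}.$$ Then for every $k\ge0$, $$\Big\|\Lambda^{k+1}-\tfrac1H\mathbf 1\mathbf 1^\top\Lambda^{k+1}\Big\|_F^2\le\frac{18(\gamma^{k+1})^2\delta^2H^3}{\epsilon^3J^2}.$$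
   Context: Byzantine setting. $J$ agents on an undirected connected graph with neighbor sets $\mathcal N_i$; honest agents $\mathcal H=\{1,\dots,H\}$, Byzantine agents $\mathcal B=\{H+1,\dots,J\}$, honest subgraph connected. For $i\in\mathcal H$: $f_i:\mathbb R^D\to\mathbb R$ is $u_f$-strongly convex and $L_f$-smooth, $C_i\subset\mathbb R^D$ nonempty compact convex; $s\in\mathbb R^D$. $g_i(\lambda)=\frac1H\max_{\theta\in C_i}\{-\lambda^\top\theta-f_i(\theta)\}+\frac1H\lambda^\top s$, $\nabla g_i(\lambda)=\frac1H s-\frac1H\arg\min_{\theta\in C_i}\{\lambda^\top\theta+f_i(\theta)\}$, $\delta^2:=\sup_{\lambda}\max_{i\in\mathcal H}\|\nabla g_i(\lambda)-\frac1H\sum_{j\in\mathcal H}\nabla g_j(\lambda)\|^2<\infty$. Contraction property: $\{AGG_i\}_{i\in\mathcal H}$ has contraction constant $\rho\ge0$ and virtual weight matrix $E=[e_{ij}]\in\mathbb R^{H\times H}$ if $e_{ij}\in(0,1]$ for $j\in(\mathcal N_i\cap\mathcal H)\cup\{i\}$, $e_{ij}=0$ otherwise, $\sum_je_{ij}=1$, and for every $i\in\mathcal H$, all honest inputs $\lambda_j$ and arbitrary Byzantine inputs ($\check\lambda_j=\lambda_j$ for honest $j$, arbitrary for Byzantine $j$), $\|AGG_i(\lambda_i,\{\check\lambda_j\}_{j\in\mathcal N_i})-\bar\lambda_i\|\le\rho\max_{j\in(\mathcal N_i\cap\mathcal H)\cup\{i\}}\|\lambda_j-\bar\lambda_i\|$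 with $\bar\lambda_i=\sum_{j}e_{ij}\lambda_j$. Algorithm: common initialization $\lambda_i^0=\lambda^0$ for $i\in\mathcal H$; $\theta_i^k=\arg\min_{\theta\in C_i}\{\theta^\top\lambda_i^k+f_i(\theta)\}$, $\lambda_i^{k+1/2}=\lambda_i^k-\gamma^k(\frac1Js-\frac1J\theta_i^k)$, $\lambda_i^{k+1}=AGG_i(\lambda_i^{k+1/2},\{\check\lambda_j^{k+1/2}\}_{j\in\mathcal N_i})$ with $\check\lambda_j^{k+1/2}$ arbitrary for Byzantine $j$. $\|\cdot\|$ is the spectral norm for matrices, $\|\cdot\|_F$ Frobenius, $\mathbf 1\in\mathbb R^H$ all-ones. *)

theory Defs
  imports "HOL-Analysis.Analysis"
begin

text \<open>Agents are indexed 0..<J; honest agents are 0..<H, Byzantine agents H..<J.\<close>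

definition strongly_convex_mod :: "real \<Rightarrow> ('v::real_inner \<Rightarrow> real) \<Rightarrow> bool" where
  "strongly_convex_mod u f \<longleftrightarrow>
     (\<forall>x y t. 0 \<le> t \<and> t \<le> 1 \<longrightarrow>
        f (t *\<^sub>R x + (1 - t) *\<^sub>R y) \<le> t * f x + (1 - t) * f y - u / 2 * t * (1 - t) * (norm (x - y))\<^sup>2)"

definition L_smooth :: "real \<Rightarrow> ('v::real_inner \<Rightarrow> real) \<Rightarrow> bool" where
  "L_smooth L f \<longleftrightarrow>
     (\<exists>g. (\<forall>x. (f has_derivative (\<lambda>h. inner (g x) h)) (at x)) \<and>
          (\<forall>x y. norm (g x - g y) \<le> L * norm (x - y)))"

definition connected_sub :: "nat set \<Rightarrow> (nat \<Rightarrow> nat set) \<Rightarrow> bool" where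
  "connected_sub S N \<longleftrightarrow>
     (\<forall>i\<in>S. \<forall>j\<in>S. (\<lambda>a b. a \<in> S \<and> b \<in> S \<and> b \<in> N a)\<^sup>*\<^sup>* i j)"

text \<open>Minimiser over C (unique under strong convexity and compactness).\<close>
definition argmin_on :: "'v set \<Rightarrow> ('v \<Rightarrow> real) \<Rightarrow> 'v" where
  "argmin_on C \<phi> = (THE x. x \<in> C \<and> (\<forall>y\<in>C. \<phi> x \<le> \<phi> y))"

definition grad_g :: "nat \<Rightarrow> 'v::real_inner \<Rightarrow> 'v set \<Rightarrow> ('v \<Rightarrow> real) \<Rightarrow> 'v \<Rightarrow> 'v" where
  "grad_g H s C f lam = (1 / real H) *\<^sub>R s - (1 / real H) *\<^sub>R argmin_on C (\<lambda>\<theta>. inner lam \<theta> + f \<theta>)"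

definition delta_sq_set :: "nat \<Rightarrow> 'v::real_inner \<Rightarrow> (nat \<Rightarrow> 'v set) \<Rightarrow> (nat \<Rightarrow> 'v \<Rightarrow> real) \<Rightarrow> real set" where
  "delta_sq_set H s C f = range (\<lambda>lam. Max ((\<lambda>i. (norm (grad_g H s (C i) (f i) lam
        - (1 / real H) *\<^sub>R (\<Sum>j<H. grad_g H s (C j) (f j) lam)))\<^sup>2) ` {..<H}))"

definition delta_sq :: "nat \<Rightarrow> 'v::real_inner \<Rightarrow> (nat \<Rightarrow> 'v set) \<Rightarrow> (nat \<Rightarrow> 'v \<Rightarrow> real) \<Rightarrow> real" where
  "delta_sq H s C f = Sup (delta_sq_set H s C f)"

definition spec_norm :: "nat \<Rightarrow> (nat \<Rightarrow> nat \<Rightarrow> real) \<Rightarrow> real" where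
  "spec_norm n M = Sup {sqrt (\<Sum>i<n. (\<Sum>j<n. M i j * x j)\<^sup>2) | x. (\<Sum>j<n. (x j)\<^sup>2) \<le> 1}"

definition frob_norm :: "nat \<Rightarrow> (nat \<Rightarrow> 'v::real_inner) \<Rightarrow> real" where
  "frob_norm n X = sqrt (\<Sum>i<n. (norm (X i))\<^sup>2)"

end

theory Submission
  imports Defs
begin

text \<open>Write \<open>x\<^sub>k\<close> for the disagreement \<open>\<parallel>\<Lambda>\<^sup>k - \<^bold>1\<^bold>1\<^sup>T\<Lambda>\<^sup>k/H\<parallel>\<^sub>F\<close> of the honest iterates.
  In the dual gradient step each agent moves by \<open>\<gamma>\<^sub>k/J\<close> times its local primal minimiser, which
  is \<open>1/u\<^sub>f\<close>-Lipschitz in the dual variable by strong convexity and differs from the other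
  agents' minimisers at a common point by at most \<open>H\<delta>\<close>. The aggregation then contracts the
  disagreement by \<open>\<parallel>E - \<^bold>1\<^bold>1\<^sup>TE/H\<parallel> = \<surd>\<kappa>\<close>, up to a Byzantine error of \<open>2\<rho>\<close> times the disagreement
  per agent. Altogether \<open>x\<^sub>k\<^sub>+\<^sub>1 \<le> a ((1 + q\<^sub>k) x\<^sub>k + t\<^sub>k)\<close> with \<open>a\<^sup>2 \<le> \<kappa> + 8\<rho>\<surd>H = 1 - \<epsilon>\<close>,
  \<open>q\<^sub>k = \<gamma>\<^sub>k/(J u\<^sub>f) \<le> \<epsilon>/9\<close> and \<open>t\<^sub>k\<^sup>2 = \<gamma>\<^sub>k\<^sup>2 \<delta>\<^sup>2 H\<^sup>3/J\<^sup>2\<close>, and since the step sizes decay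
  slowly, \<open>(2 - \<epsilon>\<^sup>2) t\<^sub>k\<^sup>2 \<le> 2 t\<^sub>k\<^sub>+\<^sub>1\<^sup>2\<close>; an induction using Young's inequality then keeps
  \<open>x\<^sub>k\<^sup>2 \<le> 18 t\<^sub>k\<^sup>2/\<epsilon>\<^sup>3\<close>.\<close>

section \<open>Disagreement of a family of vectors\<close>

definition mean :: "nat \<Rightarrow> (nat \<Rightarrow> 'v::real_vector) \<Rightarrow> 'v" where
  "mean n X = (1 / real n) *\<^sub>R (\<Sum>j<n. X j)"

text \<open>In matrix notation, \<open>\<parallel>X - \<^bold>1\<^bold>1\<^sup>TX/n\<parallel>\<^sub>F\<close> for the matrix with rows \<open>X 0, \<dots>, X (n - 1)\<close>.\<close>
definition disagreement :: "nat \<Rightarrow> (nat \<Rightarrow> 'v::real_inner) \<Rightarrow> real" where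
  "disagreement n X = frob_norm n (\<lambda>i. X i - mean n X)"

lemma frob_norm_eq_L2_set: "frob_norm n X = L2_set (\<lambda>i. norm (X i)) {..<n}"
  by (simp add: frob_norm_def L2_set_def)

lemma frob_norm_cong: "(\<And>i. i < n \<Longrightarrow> X i = Y i) \<Longrightarrow> frob_norm n X = frob_norm n Y"
  unfolding frob_norm_def by (metis (no_types, lifting) lessThan_iff sum.cong)

lemma frob_norm_nonneg: "0 \<le> frob_norm n X"
  by (simp add: frob_norm_def sum_nonneg)

lemma power2_frob_norm: "(frob_norm n X)\<^sup>2 = (\<Sum>i<n. (norm (X i))\<^sup>2)"
  by (simp add: frob_norm_def sum_nonneg)

lemma frob_norm_triangle: "frob_norm n (\<lambda>i. X i + Y i) \<le> frob_norm n X + frob_norm n Y"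
proof -
  have "frob_norm n (\<lambda>i. X i + Y i) \<le> L2_set (\<lambda>i. norm (X i) + norm (Y i)) {..<n}"
    unfolding frob_norm_eq_L2_set by (rule L2_set_mono) (auto simp: norm_triangle_ineq)
  also have "\<dots> \<le> frob_norm n X + frob_norm n Y"
    unfolding frob_norm_eq_L2_set by (rule L2_set_triangle_ineq)
  finally show ?thesis .
qed

lemma frob_norm_mono:
  "(\<And>i. i < n \<Longrightarrow> norm (X i) \<le> norm (Y i)) \<Longrightarrow> frob_norm n X \<le> frob_norm n Y"
  unfolding frob_norm_eq_L2_set by (rule L2_set_mono) auto

lemma frob_norm_scaleR: "frob_norm n (\<lambda>i. c *\<^sub>R X i) = \<bar>c\<bar> * frob_norm n X"
  unfolding frob_norm_eq_L2_set by (simp add: L2_set_right_distrib[symmetric])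

lemma frob_norm_le_const:
  assumes "\<And>i. i < n \<Longrightarrow> norm (X i) \<le> b"
  shows "frob_norm n X \<le> sqrt (real n) * b"
proof (cases "n = 0")
  case True then show ?thesis by (simp add: frob_norm_def)
next
  case False
  then have "0 \<le> b" using assms[of 0] norm_ge_zero order_trans by blast
  have "frob_norm n X \<le> L2_set (\<lambda>i. b) {..<n}"
    unfolding frob_norm_eq_L2_set by (rule L2_set_mono) (auto simp: assms)
  also have "\<dots> = sqrt (real n) * b" by (simp add: L2_set_constant \<open>0 \<le> b\<close>)
  finally show ?thesis .
qed

lemma norm_le_frob_norm: "i < n \<Longrightarrow> norm (X i) \<le> frob_norm n X"
  unfolding frob_norm_eq_L2_set by (rule member_le_L2_set) auto

lemma sum_sub_mean: "0 < n \<Longrightarrow> (\<Sum>i<n. X i - mean n X) = 0"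
  by (simp add: mean_def sum_subtractf sum_constant_scaleR)

lemma mean_const: "0 < n \<Longrightarrow> mean n (\<lambda>_. c) = c"
  by (simp add: mean_def sum_constant_scaleR)

lemma disagreement_nonneg: "0 \<le> disagreement n X"
  unfolding disagreement_def by (rule frob_norm_nonneg)

lemma norm_sub_mean_le_disagreement: "i < n \<Longrightarrow> norm (X i - mean n X) \<le> disagreement n X"
  unfolding disagreement_def by (rule norm_le_frob_norm)

lemma disagreement_cong:
  assumes "\<And>i. i < n \<Longrightarrow> X i = Y i"
  shows "disagreement n X = disagreement n Y"
proof -
  have "mean n X = mean n Y" unfolding mean_def using assms by (metis lessThan_iff sum.cong)
  then show ?thesis unfolding disagreement_def by (intro frob_norm_cong) (simp add: assms)
qed

lemma disagreement_const: "0 < n \<Longrightarrow> disagreement n (\<lambda>_. c) = 0"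
  by (simp add: disagreement_def mean_const frob_norm_def)

lemma disagreement_le_frob_norm:
  fixes X :: "nat \<Rightarrow> 'v::real_inner"
  assumes "0 < n"
  shows "disagreement n X \<le> frob_norm n (\<lambda>i. X i - c)"
proof -
  let ?m = "mean n X"
  have "(\<Sum>i<n. (norm (X i - c))\<^sup>2)
      = (\<Sum>i<n. (norm (X i - ?m))\<^sup>2 + 2 * inner (X i - ?m) (?m - c) + (norm (?m - c))\<^sup>2)"
    by (rule sum.cong) (simp_all add: dot_norm[of "X _ - ?m" "?m - c"] field_simps)
  also have "\<dots> = (\<Sum>i<n. (norm (X i - ?m))\<^sup>2) + 2 * inner (\<Sum>i<n. X i - ?m) (?m - c)
                 + real n * (norm (?m - c))\<^sup>2"
    by (simp add: sum.distrib inner_sum_left sum_distrib_left)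
  also have "(\<Sum>i<n. X i - ?m) = 0" by (rule sum_sub_mean[OF assms])
  finally have "(\<Sum>i<n. (norm (X i - ?m))\<^sup>2) \<le> (\<Sum>i<n. (norm (X i - c))\<^sup>2)"
    by simp
  then show ?thesis unfolding disagreement_def frob_norm_def by simp
qed

lemma disagreement_diff_scaleR_le:
  fixes X Y :: "nat \<Rightarrow> 'v::real_inner"
  assumes "0 < n"
  shows "disagreement n (\<lambda>i. X i - c *\<^sub>R (w - Y i)) \<le> disagreement n X + \<bar>c\<bar> * disagreement n Y"
proof -
  have "disagreement n (\<lambda>i. X i - c *\<^sub>R (w - Y i))
      \<le> frob_norm n (\<lambda>i. (X i - mean n X) + c *\<^sub>R (Y i - mean n Y))"
    using disagreement_le_frob_norm[OF assms, of "\<lambda>i. X i - c *\<^sub>R (w - Y i)"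
        "mean n X - c *\<^sub>R (w - mean n Y)"]
    by (simp add: algebra_simps)
  also have "\<dots> \<le> frob_norm n (\<lambda>i. X i - mean n X) + frob_norm n (\<lambda>i. c *\<^sub>R (Y i - mean n Y))"
    by (rule frob_norm_triangle)
  also have "\<dots> = disagreement n X + \<bar>c\<bar> * disagreement n Y"
    by (simp add: frob_norm_scaleR disagreement_def)
  finally show ?thesis .
qed

lemma disagreement_comp_le:
  fixes th :: "nat \<Rightarrow> 'v::real_inner \<Rightarrow> 'w::real_inner"
  assumes "0 < n" and "0 < u"
    and lip: "\<And>i x y. i < n \<Longrightarrow> norm (th i x - th i y) \<le> norm (x - y) / u"
    and dev: "\<And>i v. i < n \<Longrightarrow> norm (th i v - mean n (\<lambda>j. th j v)) \<le> b"
  shows "disagreement n (\<lambda>i. th i (X i)) \<le> disagreement n X / u + sqrt (real n) * b"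
proof -
  let ?m = "mean n X"
  have "disagreement n (\<lambda>i. th i (X i))
      \<le> frob_norm n (\<lambda>i. (th i (X i) - th i ?m) + (th i ?m - mean n (\<lambda>j. th j ?m)))"
    using disagreement_le_frob_norm[OF \<open>0 < n\<close>] by simp
  also have "\<dots> \<le> frob_norm n (\<lambda>i. (1 / u) *\<^sub>R (X i - ?m)) + sqrt (real n) * b"
    using \<open>0 < u\<close> lip dev
    by (intro order_trans[OF frob_norm_triangle] add_mono frob_norm_mono frob_norm_le_const) auto
  also have "\<dots> = disagreement n X / u + sqrt (real n) * b"
    using \<open>0 < u\<close> by (simp add: frob_norm_scaleR disagreement_def)
  finally show ?thesis .
qed

lemma disagreement_dual_step_le:
  fixes th :: "nat \<Rightarrow> 'v::real_inner \<Rightarrow> 'v"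
  assumes "0 < n" and "0 < u"
    and "\<And>i x y. i < n \<Longrightarrow> norm (th i x - th i y) \<le> norm (x - y) / u"
    and "\<And>i v. i < n \<Longrightarrow> norm (th i v - mean n (\<lambda>j. th j v)) \<le> b"
  shows "disagreement n (\<lambda>i. X i - c *\<^sub>R (w - th i (X i)))
           \<le> (1 + \<bar>c\<bar> / u) * disagreement n X + \<bar>c\<bar> * (sqrt (real n) * b)"
proof -
  have "disagreement n (\<lambda>i. X i - c *\<^sub>R (w - th i (X i)))
      \<le> disagreement n X + \<bar>c\<bar> * disagreement n (\<lambda>i. th i (X i))"
    by (rule disagreement_diff_scaleR_le[OF \<open>0 < n\<close>])
  also have "\<dots> \<le> disagreement n X + \<bar>c\<bar> * (disagreement n X / u + sqrt (real n) * b)"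
    by (intro add_left_mono mult_left_mono disagreement_comp_le[OF assms] abs_ge_zero)
  also have "\<dots> = (1 + \<bar>c\<bar> / u) * disagreement n X + \<bar>c\<bar> * (sqrt (real n) * b)"
    by (simp add: algebra_simps)
  finally show ?thesis .
qed

section \<open>The spectral norm\<close>

lemma spec_norm_bdd_above:
  fixes M :: "nat \<Rightarrow> nat \<Rightarrow> real"
  shows "bdd_above {sqrt (\<Sum>i<n. (\<Sum>j<n. M i j * x j)\<^sup>2) | x. (\<Sum>j<n. (x j)\<^sup>2) \<le> 1}"
proof (rule bdd_aboveI, clarify)
  fix x :: "nat \<Rightarrow> real" assume x: "(\<Sum>j<n. (x j)\<^sup>2) \<le> 1"
  have "\<bar>x j\<bar> \<le> 1" if "j < n" for j
  proof -
    have "(x j)\<^sup>2 \<le> (\<Sum>j<n. (x j)\<^sup>2)"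
      by (rule member_le_sum) (use that in auto)
    then show ?thesis using x abs_square_le_1 by fastforce
  qed
  then have "\<bar>\<Sum>j<n. M i j * x j\<bar> \<le> (\<Sum>j<n. \<bar>M i j\<bar>)" for i
    by (intro order_trans[OF sum_abs] sum_mono) (auto simp: abs_mult intro: mult_left_le)
  then have "(\<Sum>j<n. M i j * x j)\<^sup>2 \<le> (\<Sum>j<n. \<bar>M i j\<bar>)\<^sup>2" for i
    by (metis power2_abs power_mono abs_ge_zero)
  then show "sqrt (\<Sum>i<n. (\<Sum>j<n. M i j * x j)\<^sup>2) \<le> sqrt (\<Sum>i<n. (\<Sum>j<n. \<bar>M i j\<bar>)\<^sup>2)"
    by (simp add: sum_mono)
qed

lemma spec_norm_ge:
  fixes M :: "nat \<Rightarrow> nat \<Rightarrow> real"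
  assumes "(\<Sum>j<n. (x j)\<^sup>2) \<le> 1"
  shows "sqrt (\<Sum>i<n. (\<Sum>j<n. M i j * x j)\<^sup>2) \<le> spec_norm n M"
  unfolding spec_norm_def by (rule cSup_upper[OF _ spec_norm_bdd_above]) (use assms in blast)

lemma spec_norm_nonneg: "0 \<le> spec_norm n M"
  using spec_norm_ge[where x="\<lambda>_. 0" and n=n and M=M] by simp

lemma spec_norm_mult_le:
  fixes M :: "nat \<Rightarrow> nat \<Rightarrow> real"
  shows "(\<Sum>i<n. (\<Sum>j<n. M i j * x j)\<^sup>2) \<le> (spec_norm n M)\<^sup>2 * (\<Sum>j<n. (x j)\<^sup>2)"
proof (cases "(\<Sum>j<n. (x j)\<^sup>2) = 0")
  case True
  then have "\<forall>j\<in>{..<n}. (x j)\<^sup>2 = 0" by (subst sum_nonneg_eq_0_iff[symmetric]) auto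
  then show ?thesis by simp
next
  case False
  define r where "r = sqrt (\<Sum>j<n. (x j)\<^sup>2)"
  have pos: "0 < (\<Sum>j<n. (x j)\<^sup>2)" using False by (simp add: sum_nonneg order_less_le)
  then have r: "0 < r" "r\<^sup>2 = (\<Sum>j<n. (x j)\<^sup>2)" by (simp_all add: r_def)
  have "(\<Sum>j<n. (x j / r)\<^sup>2) = 1"
    using r False by (simp add: power_divide sum_divide_distrib[symmetric])
  then have "sqrt (\<Sum>i<n. (\<Sum>j<n. M i j * (x j / r))\<^sup>2) \<le> spec_norm n M"
    by (intro spec_norm_ge) simp
  moreover have "(\<Sum>i<n. (\<Sum>j<n. M i j * (x j / r))\<^sup>2) = (\<Sum>i<n. (\<Sum>j<n. M i j * x j)\<^sup>2) / r\<^sup>2"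
    by (simp add: sum_divide_distrib[symmetric] power_divide)
  ultimately have "sqrt ((\<Sum>i<n. (\<Sum>j<n. M i j * x j)\<^sup>2) / r\<^sup>2) \<le> spec_norm n M"
    by simp
  then have "(\<Sum>i<n. (\<Sum>j<n. M i j * x j)\<^sup>2) / r\<^sup>2 \<le> (spec_norm n M)\<^sup>2"
    by (rule sqrt_le_D)
  then show ?thesis using r pos by (simp add: divide_le_eq)
qed

lemma power2_norm_eq_sum_Basis: "(norm (v::'v::euclidean_space))\<^sup>2 = (\<Sum>b\<in>Basis. (inner v b)\<^sup>2)"
  unfolding power2_norm_eq_inner by (subst euclidean_inner) (simp add: power2_eq_square)

text \<open>Applying M to an n x D matrix acts column by column, one coordinate of \<open>'v\<close> at a time.\<close>
lemma frob_norm_matrix_mult_le: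
  fixes W :: "nat \<Rightarrow> 'v::euclidean_space"
  shows "frob_norm n (\<lambda>i. \<Sum>j<n. M i j *\<^sub>R W j) \<le> spec_norm n M * frob_norm n W"
proof -
  have "(frob_norm n (\<lambda>i. \<Sum>j<n. M i j *\<^sub>R W j))\<^sup>2
      = (\<Sum>b\<in>Basis. \<Sum>i<n. (\<Sum>j<n. M i j * inner (W j) b)\<^sup>2)"
    by (simp add: power2_frob_norm power2_norm_eq_sum_Basis inner_sum_left sum.swap[of _ "{..<n}" Basis])
  also have "\<dots> \<le> (\<Sum>b\<in>(Basis::'v set). (spec_norm n M)\<^sup>2 * (\<Sum>j<n. (inner (W j) b)\<^sup>2))"
    by (intro sum_mono spec_norm_mult_le)
  also have "\<dots> = (spec_norm n M * frob_norm n W)\<^sup>2"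
    by (simp add: power2_frob_norm power2_norm_eq_sum_Basis sum_distrib_left power_mult_distrib
        sum.swap[of _ "{..<n}" Basis])
  finally show ?thesis
    by (rule power2_le_imp_le) (simp add: spec_norm_nonneg frob_norm_nonneg)
qed

section \<open>Robust aggregation\<close>

lemma mix_sub_mean_eq:
  fixes h :: "nat \<Rightarrow> 'v::real_vector"
  assumes "0 < n" and E_row: "\<And>i. i < n \<Longrightarrow> (\<Sum>j<n. E i j) = 1" and "i < n"
  defines "Z \<equiv> \<lambda>i. \<Sum>j<n. E i j *\<^sub>R h j"
  shows "Z i - mean n Z = (\<Sum>j<n. (E i j - (1 / real n) * (\<Sum>l<n. E l j)) *\<^sub>R (h j - mean n h))"
proof -
  define c where "c j = E i j - (1 / real n) * (\<Sum>l<n. E l j)" for j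
  have "(\<Sum>j<n. \<Sum>l<n. E l j) = (\<Sum>l<n. \<Sum>j<n. E l j)" by (rule sum.swap)
  then have col: "(\<Sum>j<n. \<Sum>l<n. E l j) = real n" using E_row by simp
  have row: "(\<Sum>j<n. c j) = 0"
    using \<open>0 < n\<close>
    by (simp add: c_def sum_subtractf sum_divide_distrib[symmetric] col E_row[OF \<open>i < n\<close>])
  have "(\<Sum>j<n. c j *\<^sub>R (h j - mean n h)) = (\<Sum>j<n. c j *\<^sub>R h j) - (\<Sum>j<n. c j) *\<^sub>R mean n h"
    by (simp add: scaleR_diff_right sum_subtractf scaleR_sum_left)
  also have "\<dots> = (\<Sum>j<n. c j *\<^sub>R h j)" by (simp add: row)
  also have "\<dots> = Z i - (1 / real n) *\<^sub>R (\<Sum>j<n. (\<Sum>l<n. E l j) *\<^sub>R h j)"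
    by (simp add: c_def Z_def scaleR_diff_left sum_subtractf scaleR_sum_right)
  also have "(\<Sum>j<n. (\<Sum>l<n. E l j) *\<^sub>R h j) = (\<Sum>l<n. Z l)"
    unfolding Z_def scaleR_sum_left by (rule sum.swap)
  finally show ?thesis by (simp add: mean_def c_def)
qed

lemma disagreement_mix_le:
  fixes h :: "nat \<Rightarrow> 'v::euclidean_space"
  assumes "0 < n" and "\<And>i. i < n \<Longrightarrow> (\<Sum>j<n. E i j) = 1"
  shows "disagreement n (\<lambda>i. \<Sum>j<n. E i j *\<^sub>R h j)
           \<le> spec_norm n (\<lambda>i j. E i j - (1 / real n) * (\<Sum>l<n. E l j)) * disagreement n h"
proof -
  have "disagreement n (\<lambda>i. \<Sum>j<n. E i j *\<^sub>R h j)
      = frob_norm n (\<lambda>i. \<Sum>j<n. (E i j - (1 / real n) * (\<Sum>l<n. E l j)) *\<^sub>R (h j - mean n h))"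
    unfolding disagreement_def by (rule frob_norm_cong) (rule mix_sub_mean_eq[OF assms])
  also have "\<dots> \<le> spec_norm n (\<lambda>i j. E i j - (1 / real n) * (\<Sum>l<n. E l j)) * disagreement n h"
    unfolding disagreement_def by (rule frob_norm_matrix_mult_le)
  finally show ?thesis .
qed

lemma norm_mix_sub_mean_le:
  fixes h :: "nat \<Rightarrow> 'v::real_inner"
  assumes "i < n" and E_nn: "\<And>j. j < n \<Longrightarrow> 0 \<le> E i j" and E_row: "(\<Sum>j<n. E i j) = 1"
  shows "norm ((\<Sum>j<n. E i j *\<^sub>R h j) - mean n h) \<le> disagreement n h"
proof -
  have "(\<Sum>j<n. E i j *\<^sub>R h j) - mean n h = (\<Sum>j<n. E i j *\<^sub>R (h j - mean n h))"
    by (simp add: scaleR_diff_right sum_subtractf scaleR_sum_left[symmetric] E_row)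
  also have "norm \<dots> \<le> (\<Sum>j<n. E i j * disagreement n h)"
    using E_nn norm_sub_mean_le_disagreement[of _ n h]
    by (intro order_trans[OF norm_sum] sum_mono) (simp add: mult_left_mono)
  also have "\<dots> = disagreement n h" by (simp add: sum_distrib_right[symmetric] E_row)
  finally show ?thesis .
qed

text \<open>The spectral term is the exact mixing step; the \<open>2\<rho>\<close> term is the error of the robust
  aggregation, since every honest input lies within twice the disagreement of the mixed value.\<close>
lemma disagreement_aggregation_le:
  fixes h y :: "nat \<Rightarrow> 'v::euclidean_space"
  assumes "0 < n" and "0 \<le> \<rho>"
    and E_nn: "\<And>i j. i < n \<Longrightarrow> j < n \<Longrightarrow> 0 \<le> E i j"
    and E_row: "\<And>i. i < n \<Longrightarrow> (\<Sum>j<n. E i j) = 1"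
    and A: "\<And>i. i < n \<Longrightarrow> A i \<subseteq> {..<n}" "\<And>i. i < n \<Longrightarrow> i \<in> A i"
    and y: "\<And>i. i < n \<Longrightarrow> norm (y i - (\<Sum>j<n. E i j *\<^sub>R h j))
              \<le> \<rho> * Max ((\<lambda>j. norm (h j - (\<Sum>m<n. E i m *\<^sub>R h m))) ` A i)"
  shows "disagreement n y
           \<le> (spec_norm n (\<lambda>i j. E i j - (1 / real n) * (\<Sum>l<n. E l j)) + 2 * \<rho> * sqrt (real n))
             * disagreement n h"
proof -
  define Z where "Z i = (\<Sum>j<n. E i j *\<^sub>R h j)" for i
  define S where "S = spec_norm n (\<lambda>i j. E i j - (1 / real n) * (\<Sum>l<n. E l j))"
  have hZ: "norm (h j - Z i) \<le> 2 * disagreement n h" if "i < n" "j < n" for i j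
  proof -
    have "norm (Z i - mean n h) \<le> disagreement n h"
      unfolding Z_def using that E_nn E_row by (intro norm_mix_sub_mean_le) auto
    moreover have "norm (h j - mean n h) \<le> disagreement n h"
      using that by (intro norm_sub_mean_le_disagreement)
    ultimately show ?thesis using norm_triangle_ineq4[of "h j - mean n h" "Z i - mean n h"] by simp
  qed
  have "norm (y i - Z i) \<le> \<rho> * (2 * disagreement n h)" if "i < n" for i
  proof -
    have "Max ((\<lambda>j. norm (h j - Z i)) ` A i) \<le> 2 * disagreement n h"
      using A[OF that] finite_subset[OF A(1)[OF that]] hZ[OF that] by (subst Max_le_iff) auto
    with y[OF that, folded Z_def] \<open>0 \<le> \<rho>\<close> show ?thesis by (meson mult_left_mono order_trans)
  qed
  then have "frob_norm n (\<lambda>i. y i - Z i) \<le> sqrt (real n) * (\<rho> * (2 * disagreement n h))"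
    by (rule frob_norm_le_const)
  moreover have "disagreement n y \<le> disagreement n Z + frob_norm n (\<lambda>i. y i - Z i)"
    using disagreement_le_frob_norm[OF \<open>0 < n\<close>, of y "mean n Z"]
      frob_norm_triangle[of n "\<lambda>i. Z i - mean n Z" "\<lambda>i. y i - Z i"]
    by (simp add: disagreement_def)
  moreover have "disagreement n Z \<le> S * disagreement n h"
    unfolding Z_def S_def by (rule disagreement_mix_le[OF \<open>0 < n\<close> E_row])
  ultimately have "disagreement n y \<le> S * disagreement n h + sqrt (real n) * (\<rho> * (2 * disagreement n h))"
    by linarith
  then show ?thesis by (simp add: S_def algebra_simps)
qed

section \<open>Strongly convex local problems\<close>

lemma L_smooth_imp_continuous_on:
  assumes "L_smooth L f"
  shows "continuous_on S f"
proof -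
  from assms obtain g where "\<And>x. (f has_derivative (\<lambda>h. inner (g x) h)) (at x)"
    unfolding L_smooth_def by blast
  then show ?thesis
    by (intro continuous_at_imp_continuous_on ballI) (rule has_derivative_continuous)
qed

lemma strongly_convex_mod_min_quadratic_growth:
  fixes f :: "'v::real_inner \<Rightarrow> real"
  assumes sc: "strongly_convex_mod u f" and "0 < u" and "convex C"
    and x: "x \<in> C" and min: "\<forall>y\<in>C. inner l x + f x \<le> inner l y + f y"
    and y: "y \<in> C"
  shows "inner l x + f x + u / 2 * (norm (y - x))\<^sup>2 \<le> inner l y + f y"
proof -
  let ?p = "\<lambda>z. inner l z + f z"
  have "z * (u / 2 * (norm (y - x))\<^sup>2) \<le> ?p y - ?p x" if z: "0 < z" "z < 1" for z
  proof -
    define t where "t = 1 - z"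
    have t: "0 < t" "t \<le> 1" using z by (simp_all add: t_def)
    have "t *\<^sub>R y + (1 - t) *\<^sub>R x \<in> C"
      using convexD[OF \<open>convex C\<close> y x, of t "1 - t"] t by simp
    then have "?p x \<le> ?p (t *\<^sub>R y + (1 - t) *\<^sub>R x)" using min by blast
    also have "\<dots> \<le> t * ?p y + (1 - t) * ?p x - u / 2 * t * (1 - t) * (norm (y - x))\<^sup>2"
      using sc[unfolded strongly_convex_mod_def, rule_format, of t y x] t
      by (simp add: inner_add_right algebra_simps)
    finally have "t * ((1 - t) * (u / 2 * (norm (y - x))\<^sup>2)) \<le> t * (?p y - ?p x)"
      by (simp add: algebra_simps)
    then show ?thesis using t by (simp add: t_def)
  qed
  then have "u / 2 * (norm (y - x))\<^sup>2 \<le> ?p y - ?p x"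
    by (rule field_le_mult_one_interval)
  then show ?thesis by simp
qed

lemma argmin_on_strongly_convex:
  fixes f :: "'v::real_inner \<Rightarrow> real" and l :: 'v
  assumes sc: "strongly_convex_mod u f" and u: "0 < u" and "continuous_on C f"
    and "compact C" and "C \<noteq> {}" and cv: "convex C"
  defines "x \<equiv> argmin_on C (\<lambda>\<theta>. inner l \<theta> + f \<theta>)"
  shows "x \<in> C" and "\<forall>y\<in>C. inner l x + f x \<le> inner l y + f y"
proof -
  let ?p = "\<lambda>z. inner l z + f z"
  have "continuous_on C ?p"
    by (intro continuous_intros \<open>continuous_on C f\<close>)
  from continuous_attains_inf[OF \<open>compact C\<close> \<open>C \<noteq> {}\<close> this]
  obtain m where m: "m \<in> C" "\<forall>y\<in>C. ?p m \<le> ?p y" by blast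
  have uniq: "z = m" if z: "z \<in> C" "\<forall>y\<in>C. ?p z \<le> ?p y" for z
  proof -
    have "?p m + u / 2 * (norm (z - m))\<^sup>2 \<le> ?p z"
      by (rule strongly_convex_mod_min_quadratic_growth[OF sc u cv m z(1)])
    moreover have "?p z \<le> ?p m" using z(2) m(1) by blast
    ultimately have "u / 2 * (norm (z - m))\<^sup>2 \<le> 0" by simp
    with u show ?thesis by (simp add: mult_le_0_iff)
  qed
  have "x = m"
    unfolding x_def argmin_on_def by (rule the_equality) (use m uniq in blast)+
  then show "x \<in> C" "\<forall>y\<in>C. ?p x \<le> ?p y" using m by simp_all
qed

text \<open>Adding the two quadratic-growth inequalities at the minimisers for l and l' gives
  \<open>u \<parallel>x - x'\<parallel>\<^sup>2 \<le> \<langle>l - l', x' - x\<rangle>\<close>.\<close>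
lemma argmin_on_lipschitz:
  fixes f :: "'v::real_inner \<Rightarrow> real"
  assumes sc: "strongly_convex_mod u f" and u: "0 < u" and cont: "continuous_on C f"
    and cpt: "compact C" and ne: "C \<noteq> {}" and cv: "convex C"
  shows "norm (argmin_on C (\<lambda>\<theta>. inner l \<theta> + f \<theta>) - argmin_on C (\<lambda>\<theta>. inner l' \<theta> + f \<theta>))
           \<le> norm (l - l') / u"
proof -
  define x where "x = argmin_on C (\<lambda>\<theta>. inner l \<theta> + f \<theta>)"
  define x' where "x' = argmin_on C (\<lambda>\<theta>. inner l' \<theta> + f \<theta>)"
  note min = argmin_on_strongly_convex[OF sc u cont cpt ne cv]
  have "inner l x + f x + u / 2 * (norm (x' - x))\<^sup>2 \<le> inner l x' + f x'"
    using min[of l] min[of l'] unfolding x_def x'_def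
    by (intro strongly_convex_mod_min_quadratic_growth[OF sc u cv]) auto
  moreover have "inner l' x' + f x' + u / 2 * (norm (x - x'))\<^sup>2 \<le> inner l' x + f x"
    using min[of l] min[of l'] unfolding x_def x'_def
    by (intro strongly_convex_mod_min_quadratic_growth[OF sc u cv]) auto
  ultimately have "u * (norm (x - x'))\<^sup>2 \<le> inner (l - l') (x' - x)"
    by (simp add: norm_minus_commute inner_diff_left inner_diff_right algebra_simps)
  also have "\<dots> \<le> norm (l - l') * norm (x - x')"
    using Cauchy_Schwarz_ineq2[of "l - l'" "x' - x"] by (simp add: norm_minus_commute)
  finally have "u * (norm (x - x')) * norm (x - x') \<le> norm (l - l') * norm (x - x')"
    by (simp add: power2_eq_square mult.assoc)
  then have "u * norm (x - x') \<le> norm (l - l')"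
    by (cases "x = x'") (simp_all add: mult_le_cancel_right)
  then show ?thesis using u by (simp add: x_def x'_def field_simps)
qed

lemma power2_grad_g_dev_le_delta_sq:
  assumes "bdd_above (delta_sq_set H s C f)" and "i < H"
  shows "(norm (grad_g H s (C i) (f i) l - (1 / real H) *\<^sub>R (\<Sum>j<H. grad_g H s (C j) (f j) l)))\<^sup>2
           \<le> delta_sq H s C f"
proof -
  let ?d = "\<lambda>i. (norm (grad_g H s (C i) (f i) l - (1 / real H) *\<^sub>R (\<Sum>j<H. grad_g H s (C j) (f j) l)))\<^sup>2"
  have "?d i \<le> Max (?d ` {..<H})" by (rule Max_ge) (use assms in auto)
  also have "\<dots> \<le> delta_sq H s C f"
    unfolding delta_sq_def by (rule cSup_upper[OF _ assms(1)]) (auto simp: delta_sq_set_def)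
  finally show ?thesis .
qed

lemma delta_sq_nonneg:
  assumes "bdd_above (delta_sq_set H s C f)" and "0 < H"
  shows "0 \<le> delta_sq H s C f"
  by (rule order_trans[OF zero_le_power2 power2_grad_g_dev_le_delta_sq[OF assms]])

text \<open>The local dual gradients differ from each other only through the local primal minimisers,
  scaled by \<open>1/H\<close>; hence \<open>\<delta>\<close> bounds the spread of the minimisers by \<open>H \<delta>\<close>.\<close>
lemma argmin_dev_le_delta:
  fixes l :: "'v::real_inner"
  assumes "bdd_above (delta_sq_set H s C f)" and "i < H"
  defines "th \<equiv> \<lambda>i. argmin_on (C i) (\<lambda>\<theta>. inner l \<theta> + f i \<theta>)"
  shows "norm (th i - mean H th) \<le> real H * sqrt (delta_sq H s C f)"
proof -
  let ?G = "\<lambda>i. grad_g H s (C i) (f i) l"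
  have H: "0 < real H" using assms(2) by simp
  have "(\<Sum>j<H. ?G j) = (\<Sum>j<H. (1 / real H) *\<^sub>R s) - (\<Sum>j<H. (1 / real H) *\<^sub>R th j)"
    unfolding grad_g_def th_def by (rule sum_subtractf)
  also have "\<dots> = s - (1 / real H) *\<^sub>R (\<Sum>j<H. th j)"
    using H by (simp add: sum_constant_scaleR scaleR_sum_right)
  finally have sum_G: "(\<Sum>j<H. ?G j) = s - (1 / real H) *\<^sub>R (\<Sum>j<H. th j)" .
  have "?G i - (1 / real H) *\<^sub>R (\<Sum>j<H. ?G j) = - (1 / real H) *\<^sub>R (th i - mean H th)"
    by (subst sum_G) (simp add: grad_g_def th_def mean_def algebra_simps)
  then have "(norm (th i - mean H th))\<^sup>2 = (real H)\<^sup>2 * (norm (?G i - (1 / real H) *\<^sub>R (\<Sum>j<H. ?G j)))\<^sup>2"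
    using H by (simp add: power_mult_distrib power_divide)
  also have "\<dots> \<le> (real H)\<^sup>2 * delta_sq H s C f"
    by (intro mult_left_mono power2_grad_g_dev_le_delta_sq assms(1,2)) simp
  finally have "norm (th i - mean H th) \<le> sqrt ((real H)\<^sup>2 * delta_sq H s C f)"
    by (rule real_le_rsqrt)
  then show ?thesis by (simp add: real_sqrt_mult)
qed

section \<open>The scalar recursion\<close>

lemma contraction_factor_sq_le:
  fixes S \<rho> :: real
  assumes "0 \<le> S" "S\<^sup>2 < 1" "0 \<le> \<rho>" "0 < n" and \<rho>: "\<rho> < (1 - S\<^sup>2) / (8 * sqrt (real n))"
  shows "(S + 2 * \<rho> * sqrt (real n))\<^sup>2 \<le> S\<^sup>2 + 8 * \<rho> * sqrt (real n)"
proof -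
  define r where "r = \<rho> * sqrt (real n)"
  have "0 < sqrt (real n)" using \<open>0 < n\<close> by simp
  then have "r < (1 - S\<^sup>2) / (8 * sqrt (real n)) * sqrt (real n)"
    unfolding r_def by (rule mult_strict_right_mono[OF \<rho>])
  also have "\<dots> = (1 - S\<^sup>2) / 8" using \<open>0 < sqrt (real n)\<close> by simp
  also have "\<dots> \<le> 1 / 8" by simp
  finally have r: "0 \<le> r" "r \<le> 1 / 8" using \<open>0 \<le> \<rho>\<close> by (simp_all add: r_def)
  have "S < 1" using \<open>0 \<le> S\<close> \<open>S\<^sup>2 < 1\<close> by (simp add: abs_square_less_1)
  then have "r * S \<le> r" "r * r \<le> r / 8"
    using r \<open>0 \<le> S\<close> by (simp_all add: mult_left_le mult_left_mono[of r "1/8" r, simplified])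
  moreover have "(S + 2 * r)\<^sup>2 = S\<^sup>2 + 4 * (r * S) + 4 * (r * r)"
    by (simp add: power2_eq_square algebra_simps)
  ultimately have "(S + 2 * r)\<^sup>2 \<le> S\<^sup>2 + 8 * r" using r by linarith
  then show ?thesis by (simp only: r_def mult.assoc)
qed

text \<open>Young's inequality with weight \<open>e/2\<close> splits the cross term; what remains is the
  polynomial inequality \<open>(1 - e) ((1 + e/2) (1 + e/9)\<^sup>2 18 + e\<^sup>3 + 2 e\<^sup>2) \<le> 9 (2 - e\<^sup>2)\<close>
  on \<open>0 < e < 1\<close>.\<close>
lemma perturbed_contraction_sq_le:
  fixes x y a q t e :: real
  assumes nonneg: "0 \<le> x" "0 \<le> y" "0 \<le> q" "0 \<le> t" and e: "0 < e" "e < 1"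
    and y: "y \<le> a * ((1 + q) * x + t)" and a: "a\<^sup>2 \<le> 1 - e" and q: "q \<le> e / 9"
    and x: "x\<^sup>2 \<le> 18 * t\<^sup>2 / e ^ 3"
  shows "y\<^sup>2 \<le> 9 * (2 - e\<^sup>2) * t\<^sup>2 / e ^ 3"
proof -
  define U where "U = (1 + q) * x"
  define K where "K = t\<^sup>2 / e ^ 3"
  have "0 \<le> U" "0 \<le> K" using nonneg e by (simp_all add: U_def K_def)
  have t2: "t\<^sup>2 = e ^ 3 * K" using e by (simp add: K_def)
  have "y\<^sup>2 \<le> (a * (U + t))\<^sup>2"
    using y \<open>0 \<le> y\<close> unfolding U_def by (intro power_mono) auto
  also have "\<dots> \<le> (1 - e) * (U + t)\<^sup>2"
    using a by (simp add: power_mult_distrib mult_right_mono)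
  finally have y2: "y\<^sup>2 \<le> (1 - e) * (U + t)\<^sup>2" .
  have "(1 + q)\<^sup>2 \<le> (1 + e / 9)\<^sup>2" using q nonneg by (intro power_mono) simp_all
  then have U2: "U\<^sup>2 \<le> (1 + e / 9)\<^sup>2 * (18 * K)"
    unfolding U_def power_mult_distrib using x by (intro mult_mono) (simp_all add: K_def)
  have "2 * U * t \<le> e / 2 * U\<^sup>2 + 2 / e * t\<^sup>2"
  proof -
    have "0 \<le> (e * U - 2 * t)\<^sup>2" by simp
    then have "(2 * e) * (2 * U * t) \<le> (2 * e) * (e / 2 * U\<^sup>2 + 2 / e * t\<^sup>2)"
      using e by (simp add: power2_eq_square algebra_simps)
    then show ?thesis using e by simp
  qed
  then have "(U + t)\<^sup>2 \<le> (1 + e / 2) * U\<^sup>2 + (1 + 2 / e) * t\<^sup>2"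
    by (simp add: power2_eq_square algebra_simps)
  also have "\<dots> \<le> (1 + e / 2) * ((1 + e / 9)\<^sup>2 * (18 * K)) + (1 + 2 / e) * (e ^ 3 * K)"
    using U2 e t2 by (intro add_mono mult_left_mono) simp_all
  also have "\<dots> = ((1 + e / 2) * (1 + e / 9)\<^sup>2 * 18 + e ^ 3 + 2 * e\<^sup>2) * K"
    using e by (simp add: field_simps power2_eq_square power3_eq_cube)
  finally have "(1 - e) * (U + t)\<^sup>2 \<le> (1 - e) * (((1 + e / 2) * (1 + e / 9)\<^sup>2 * 18 + e ^ 3 + 2 * e\<^sup>2) * K)"
    using e by (intro mult_left_mono) simp_all
  also have "\<dots> \<le> 9 * (2 - e\<^sup>2) * K"
  proof -
    have "9 * (2 - e\<^sup>2) - (1 - e) * ((1 + e / 2) * (1 + e / 9)\<^sup>2 * 18 + e ^ 3 + 2 * e\<^sup>2)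
          = 5 * e - 2 / 9 * e\<^sup>2 + 28 / 9 * e ^ 3 + 10 / 9 * e ^ 4"
      by (simp add: field_simps power2_eq_square power3_eq_cube power4_eq_xxxx)
    moreover have "e\<^sup>2 \<le> e" "0 \<le> e ^ 3" "0 \<le> e ^ 4"
      using e by (simp_all add: power2_eq_square mult_le_cancel_left1)
    ultimately have "(1 - e) * ((1 + e / 2) * (1 + e / 9)\<^sup>2 * 18 + e ^ 3 + 2 * e\<^sup>2) \<le> 9 * (2 - e\<^sup>2)"
      using e by linarith
    then show ?thesis using \<open>0 \<le> K\<close> by (simp add: mult.assoc[symmetric] mult_right_mono)
  qed
  finally show ?thesis using y2 by (simp add: K_def)
qed

lemma perturbed_contraction_sq_bound:
  fixes x q t :: "nat \<Rightarrow> real"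
  assumes x0: "x 0 = 0" and e: "0 < e" "e < 1" and a: "a\<^sup>2 \<le> 1 - e"
    and nonneg: "\<And>k. 0 \<le> x k" "\<And>k. 0 \<le> q k" "\<And>k. 0 \<le> t k" and q: "\<And>k. q k \<le> e / 9"
    and step: "\<And>k. x (Suc k) \<le> a * ((1 + q k) * x k + t k)"
    and t: "\<And>k. (2 - e\<^sup>2) * (t k)\<^sup>2 \<le> 2 * (t (Suc k))\<^sup>2"
  shows "(x k)\<^sup>2 \<le> 18 * (t k)\<^sup>2 / e ^ 3"
proof (induction k)
  case 0
  then show ?case using x0 e by simp
next
  case (Suc k)
  have "(x (Suc k))\<^sup>2 \<le> 9 * (2 - e\<^sup>2) * (t k)\<^sup>2 / e ^ 3"
    by (rule perturbed_contraction_sq_le[OF nonneg(1,1,2,3) e step a q Suc.IH])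
  also have "\<dots> \<le> 18 * (t (Suc k))\<^sup>2 / e ^ 3"
  proof (rule divide_right_mono)
    have "9 * ((2 - e\<^sup>2) * (t k)\<^sup>2) \<le> 9 * (2 * (t (Suc k))\<^sup>2)" by (rule mult_left_mono[OF t]) simp
    then show "9 * (2 - e\<^sup>2) * (t k)\<^sup>2 \<le> 18 * (t (Suc k))\<^sup>2" by (simp only: mult.assoc)
  qed (use e in simp)
  finally show ?case .
qed

lemma step_size_le:
  fixes g p e :: real
  assumes e: "0 < e" "e < 1" and p: "0 < p"
    and step: "18 * g\<^sup>2 / (e * p\<^sup>2) \<le> (2 - e) * e\<^sup>2 / (3 * (3 - e))"
  shows "\<bar>g\<bar> / p \<le> e / 9"
proof -
  have "0 \<le> e / 3 * (3 * (e - 4 / 3)\<^sup>2 + 2 / 3)" using e by simp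
  also have "\<dots> = 2 * e / 9 * (3 * (3 - e)) - (2 - e) * e\<^sup>2"
    by (simp add: power2_eq_square field_simps)
  finally have key: "(2 - e) * e\<^sup>2 / (3 * (3 - e)) \<le> 2 * e / 9"
    using e by (simp add: divide_le_eq)
  have pos: "0 < e * p\<^sup>2" using e p by simp
  have "18 * g\<^sup>2 \<le> (2 - e) * e\<^sup>2 / (3 * (3 - e)) * (e * p\<^sup>2)"
    using step by (simp only: pos_divide_le_eq[OF pos])
  also have "\<dots> \<le> 2 * e / 9 * (e * p\<^sup>2)"
    using key pos by (intro mult_right_mono) simp_all
  finally have "g\<^sup>2 \<le> (e / 9)\<^sup>2 * p\<^sup>2"
    by (simp add: power2_eq_square)
  then have "(\<bar>g\<bar> / p)\<^sup>2 \<le> (e / 9)\<^sup>2"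
    using p by (simp add: power_divide divide_le_eq)
  then show ?thesis by (rule power2_le_imp_le) (use e in simp)
qed

lemma step_size_ratio_le:
  fixes g g' e :: real
  assumes "0 < e" "e < 1" and "1 \<le> g\<^sup>2 / g'\<^sup>2" and "g\<^sup>2 / g'\<^sup>2 \<le> 2 / (1 + (1 - e\<^sup>2))"
  shows "(2 - e\<^sup>2) * g\<^sup>2 \<le> 2 * g'\<^sup>2"
proof -
  have "0 < g'\<^sup>2" using assms(3) by (cases "g' = 0") simp_all
  have "e\<^sup>2 < 1" using assms(1,2) by (simp add: abs_square_less_1)
  then have "0 < 2 - e\<^sup>2" by simp
  have "g\<^sup>2 \<le> 2 / (2 - e\<^sup>2) * g'\<^sup>2"
    using assms(4) \<open>0 < g'\<^sup>2\<close> by (simp add: divide_le_eq)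
  then have "(2 - e\<^sup>2) * g\<^sup>2 \<le> (2 - e\<^sup>2) * (2 / (2 - e\<^sup>2) * g'\<^sup>2)"
    using \<open>0 < 2 - e\<^sup>2\<close> by (intro mult_left_mono) simp_all
  then show ?thesis using \<open>0 < 2 - e\<^sup>2\<close> by simp
qed

section \<open>The Byzantine-resilient dual iteration\<close>

lemma byzantine_dual_disagreement_step:
  fixes f :: "nat \<Rightarrow> 'v::euclidean_space \<Rightarrow> real"
    and lam theta half :: "nat \<Rightarrow> nat \<Rightarrow> 'v"
  assumes HJ: "0 < H" "H \<le> J"
    and u_pos: "0 < u_f"
    and f_sc: "\<And>i. i < H \<Longrightarrow> strongly_convex_mod u_f (f i)"
    and f_sm: "\<And>i. i < H \<Longrightarrow> L_smooth L_f (f i)"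
    and C_ne: "\<And>i. i < H \<Longrightarrow> C i \<noteq> {}"
    and C_cpt: "\<And>i. i < H \<Longrightarrow> compact (C i)"
    and C_cvx: "\<And>i. i < H \<Longrightarrow> convex (C i)"
    and delta_fin: "bdd_above (delta_sq_set H s C f)"
    and rho_nn: "0 \<le> \<rho>"
    and E_nn: "\<And>i j. i < H \<Longrightarrow> j < H \<Longrightarrow> 0 \<le> E i j"
    and E_row: "\<And>i. i < H \<Longrightarrow> (\<Sum>j<H. E i j) = 1"
    and AGG_contr: "\<And>i l x. i < H \<Longrightarrow> (\<forall>j<H. x j = l j) \<Longrightarrow>
        norm (AGG i (l i) x - (\<Sum>j<H. E i j *\<^sub>R l j))
          \<le> \<rho> * Max ((\<lambda>j. norm (l j - (\<Sum>m<H. E i m *\<^sub>R l m))) ` ({j. j < H \<and> j \<in> N i} \<union> {i}))"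
    and theta_def: "\<And>i. i < H \<Longrightarrow> theta k i = argmin_on (C i) (\<lambda>\<theta>. inner \<theta> (lam k i) + f i \<theta>)"
    and half_def: "\<And>i. i < H \<Longrightarrow>
        half k i = lam k i - \<gamma> k *\<^sub>R ((1 / real J) *\<^sub>R s - (1 / real J) *\<^sub>R theta k i)"
    and lam_step: "\<And>i. i < H \<Longrightarrow>
        lam (Suc k) i = AGG i (half k i) (\<lambda>j. if j < H then half k j else byz k i j)"
  shows "disagreement H (lam (Suc k))
    \<le> (spec_norm H (\<lambda>i j. E i j - (1 / real H) * (\<Sum>l<H. E l j)) + 2 * \<rho> * sqrt (real H))
      * ((1 + \<bar>\<gamma> k\<bar> / (real J * u_f)) * disagreement H (lam k)
         + \<bar>\<gamma> k\<bar> / real J * (sqrt (real H) * (real H * sqrt (delta_sq H s C f))))"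
proof -
  define th where "th i v = argmin_on (C i) (\<lambda>\<theta>. inner v \<theta> + f i \<theta>)" for i v
  define a where "a = spec_norm H (\<lambda>i j. E i j - (1 / real H) * (\<Sum>l<H. E l j)) + 2 * \<rho> * sqrt (real H)"
  define b where "b = real H * sqrt (delta_sq H s C f)"
  have J: "0 < real J" using HJ by simp
  have "0 \<le> a" using rho_nn spec_norm_nonneg by (simp add: a_def)
  have "disagreement H (lam (Suc k)) \<le> a * disagreement H (half k)"
    unfolding a_def
  proof (rule disagreement_aggregation_le[OF HJ(1) rho_nn E_nn E_row])
    fix i assume "i < H"
    show "norm (lam (Suc k) i - (\<Sum>j<H. E i j *\<^sub>R half k j))
        \<le> \<rho> * Max ((\<lambda>j. norm (half k j - (\<Sum>m<H. E i m *\<^sub>R half k m)))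
                    ` ({j. j < H \<and> j \<in> N i} \<union> {i}))"
      unfolding lam_step[OF \<open>i < H\<close>] by (rule AGG_contr[OF \<open>i < H\<close>]) simp
  qed auto
  also have "disagreement H (half k)
      = disagreement H (\<lambda>i. lam k i - (\<gamma> k / real J) *\<^sub>R (s - th i (lam k i)))"
    using J by (intro disagreement_cong)
      (simp add: half_def theta_def th_def inner_commute scaleR_diff_right)
  also have "a * \<dots> \<le> a * ((1 + \<bar>\<gamma> k / real J\<bar> / u_f) * disagreement H (lam k)
      + \<bar>\<gamma> k / real J\<bar> * (sqrt (real H) * b))"
  proof (intro mult_left_mono[OF _ \<open>0 \<le> a\<close>] disagreement_dual_step_le[OF HJ(1) u_pos])
    fix i x y assume "i < H"
    show "norm (th i x - th i y) \<le> norm (x - y) / u_f"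
      unfolding th_def using \<open>i < H\<close> f_sm L_smooth_imp_continuous_on
      by (intro argmin_on_lipschitz f_sc u_pos C_cpt C_ne C_cvx) auto
  next
    fix i v assume "i < H"
    show "norm (th i v - mean H (\<lambda>j. th j v)) \<le> b"
      unfolding th_def b_def by (rule argmin_dev_le_delta[OF delta_fin \<open>i < H\<close>])
  qed
  finally show ?thesis using J by (simp add: a_def b_def abs_divide)
qed

text \<open>The communication graph enters only through \<open>E\<close> and the contraction property of the
  aggregation rules.\<close>
theorem lemma4:
  fixes J H :: nat
    and N :: "nat \<Rightarrow> nat set"
    and f :: "nat \<Rightarrow> 'v::euclidean_space \<Rightarrow> real"
    and C :: "nat \<Rightarrow> 'v set"
    and s :: 'v
    and u_f L_f :: real
    and AGG :: "nat \<Rightarrow> 'v \<Rightarrow> (nat \<Rightarrow> 'v) \<Rightarrow> 'v"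
    and \<rho> :: real
    and E :: "nat \<Rightarrow> nat \<Rightarrow> real"
    and \<gamma> :: "nat \<Rightarrow> real"
    and lam0 :: 'v
    and lam :: "nat \<Rightarrow> nat \<Rightarrow> 'v"
    and theta :: "nat \<Rightarrow> nat \<Rightarrow> 'v"
    and half :: "nat \<Rightarrow> nat \<Rightarrow> 'v"
    and byz :: "nat \<Rightarrow> nat \<Rightarrow> nat \<Rightarrow> 'v"
    and \<kappa> \<epsilon> :: real
  assumes HJ: "0 < H" "H \<le> J"
    and N_sub: "\<And>i. i < J \<Longrightarrow> N i \<subseteq> {..<J}"
    and N_irrefl: "\<And>i. i < J \<Longrightarrow> i \<notin> N i"
    and N_sym: "\<And>i j. i < J \<Longrightarrow> j < J \<Longrightarrow> j \<in> N i \<longleftrightarrow> i \<in> N j"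
    and G_conn: "connected_sub {..<J} N"
    and H_conn: "connected_sub {..<H} N"
    and u_pos: "0 < u_f"
    and f_sc: "\<And>i. i < H \<Longrightarrow> strongly_convex_mod u_f (f i)"
    and f_sm: "\<And>i. i < H \<Longrightarrow> L_smooth L_f (f i)"
    and C_ne: "\<And>i. i < H \<Longrightarrow> C i \<noteq> {}"
    and C_cpt: "\<And>i. i < H \<Longrightarrow> compact (C i)"
    and C_cvx: "\<And>i. i < H \<Longrightarrow> convex (C i)"
    and delta_fin: "bdd_above (delta_sq_set H s C f)"
    and rho_nn: "0 \<le> \<rho>"
    and E_pos: "\<And>i j. i < H \<Longrightarrow> j < H \<Longrightarrow> j \<in> N i \<or> j = i \<Longrightarrow> 0 < E i j \<and> E i j \<le> 1"
    and E_zero: "\<And>i j. i < H \<Longrightarrow> j < H \<Longrightarrow> \<not> (j \<in> N i \<or> j = i) \<Longrightarrow> E i j = 0"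
    and E_row: "\<And>i. i < H \<Longrightarrow> (\<Sum>j<H. E i j) = 1"
    and AGG_local: "\<And>i v x y. i < H \<Longrightarrow> (\<forall>j\<in>N i. x j = y j) \<Longrightarrow> AGG i v x = AGG i v y"
    and AGG_contr: "\<And>i l x. i < H \<Longrightarrow> (\<forall>j<H. x j = l j) \<Longrightarrow>
        norm (AGG i (l i) x - (\<Sum>j<H. E i j *\<^sub>R l j))
          \<le> \<rho> * Max ((\<lambda>j. norm (l j - (\<Sum>m<H. E i m *\<^sub>R l m))) ` ({j. j < H \<and> j \<in> N i} \<union> {i}))"
    and kappa_def: "\<kappa> = (spec_norm H (\<lambda>i j. E i j - (1 / real H) * (\<Sum>l<H. E l j)))\<^sup>2"
    and kappa_lt: "\<kappa> < 1"
    and rho_lt: "\<rho> < (1 - \<kappa>) / (8 * sqrt (real H))"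
    and eps_def: "\<epsilon> = 1 - \<kappa> - 8 * \<rho> * sqrt (real H)"
    and eps_pos: "0 < \<epsilon>" and eps_lt: "\<epsilon> < 1"
    and step1: "\<And>k. 18 * (\<gamma> k)\<^sup>2 / (\<epsilon> * u_f\<^sup>2 * (real J)\<^sup>2)
                   \<le> (2 - \<epsilon>) * \<epsilon>\<^sup>2 / (3 * (3 - \<epsilon>))"
    and step2: "\<And>k. 1 \<le> (\<gamma> k)\<^sup>2 / (\<gamma> (Suc k))\<^sup>2"
    and step3: "\<And>k. (\<gamma> k)\<^sup>2 / (\<gamma> (Suc k))\<^sup>2 \<le> 2 / (1 + (1 - \<epsilon>\<^sup>2))"
    and init: "\<And>i. i < H \<Longrightarrow> lam 0 i = lam0"
    and theta_def: "\<And>k i. i < H \<Longrightarrow> theta k i = argmin_on (C i) (\<lambda>\<theta>. inner \<theta> (lam k i) + f i \<theta>)"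
    and half_def: "\<And>k i. i < H \<Longrightarrow>
        half k i = lam k i - \<gamma> k *\<^sub>R ((1 / real J) *\<^sub>R s - (1 / real J) *\<^sub>R theta k i)"
    and lam_step: "\<And>k i. i < H \<Longrightarrow>
        lam (Suc k) i = AGG i (half k i) (\<lambda>j. if j < H then half k j else byz k i j)"
  shows "(frob_norm H (\<lambda>i. lam (Suc k) i - (1 / real H) *\<^sub>R (\<Sum>j<H. lam (Suc k) j)))\<^sup>2
           \<le> 18 * (\<gamma> (Suc k))\<^sup>2 * delta_sq H s C f * (real H)^3 / (\<epsilon>^3 * (real J)\<^sup>2)"
proof -
  define S where "S = spec_norm H (\<lambda>i j. E i j - (1 / real H) * (\<Sum>l<H. E l j))"
  define b where "b = sqrt (real H) * (real H * sqrt (delta_sq H s C f))"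
  have J: "0 < real J" using HJ by simp
  have "0 \<le> b" using delta_sq_nonneg[OF delta_fin HJ(1)] by (simp add: b_def)
  have E_nn: "0 \<le> E i j" if "i < H" "j < H" for i j
    using E_pos[OF that] E_zero[OF that] by (cases "j \<in> N i \<or> j = i") auto
  have "S\<^sup>2 = \<kappa>" by (simp add: kappa_def S_def)
  then have a: "(S + 2 * \<rho> * sqrt (real H))\<^sup>2 \<le> 1 - \<epsilon>"
    using contraction_factor_sq_le[of S \<rho> H] spec_norm_nonneg rho_nn HJ(1) kappa_lt rho_lt eps_def
    by (simp add: S_def)
  have bound: "(disagreement H (lam k))\<^sup>2 \<le> 18 * (\<bar>\<gamma> k\<bar> / real J * b)\<^sup>2 / \<epsilon> ^ 3" for k
  proof (rule perturbed_contraction_sq_bound[OF _ eps_pos eps_lt a, where x = "\<lambda>k. disagreement H (lam k)"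
        and q = "\<lambda>k. \<bar>\<gamma> k\<bar> / (real J * u_f)" and t = "\<lambda>k. \<bar>\<gamma> k\<bar> / real J * b"])
    show "disagreement H (lam 0) = 0"
      using init disagreement_cong[of H "lam 0" "\<lambda>_. lam0"] disagreement_const[OF HJ(1)] by simp
    show "\<bar>\<gamma> k\<bar> / (real J * u_f) \<le> \<epsilon> / 9" for k
      using step1[of k] J u_pos
      by (intro step_size_le[OF eps_pos eps_lt]) (simp_all add: power_mult_distrib mult_ac)
    show "(2 - \<epsilon>\<^sup>2) * (\<bar>\<gamma> k\<bar> / real J * b)\<^sup>2 \<le> 2 * (\<bar>\<gamma> (Suc k)\<bar> / real J * b)\<^sup>2" for k
      using mult_right_mono[OF step_size_ratio_le[OF eps_pos eps_lt step2[of k] step3[of k]],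
          of "(b / real J)\<^sup>2"]
      by (simp add: power_mult_distrib power_divide mult_ac)
    show "disagreement H (lam (Suc k))
        \<le> (S + 2 * \<rho> * sqrt (real H)) * ((1 + \<bar>\<gamma> k\<bar> / (real J * u_f)) * disagreement H (lam k) + \<bar>\<gamma> k\<bar> / real J * b)"
      for k
      unfolding S_def b_def
      by (intro byzantine_dual_disagreement_step[where L_f = L_f and AGG = AGG and N = N and theta = theta
            and half = half and byz = byz] HJ u_pos f_sc f_sm C_ne C_cpt C_cvx delta_fin rho_nn
          E_nn E_row AGG_contr theta_def half_def lam_step)
  qed (use J u_pos \<open>0 \<le> b\<close> disagreement_nonneg in simp_all)
  have "(\<bar>\<gamma> (Suc k)\<bar> / real J * b)\<^sup>2 = (\<gamma> (Suc k))\<^sup>2 * delta_sq H s C f * (real H)^3 / (real J)\<^sup>2"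
    using delta_sq_nonneg[OF delta_fin HJ(1)]
    by (simp add: b_def power_mult_distrib power_divide power3_eq_cube power2_eq_square[of "real H"])
  with bound[of "Suc k"] show ?thesis by (simp add: disagreement_def mean_def mult_ac)
qed

end
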